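(* Assume the setting and Algorithm 2 described in the context, with $|Q|\ge2$, and suppose $L$ is convex. Take $n_1=\Theta(\frac{M^2}{\varepsilon_1^2}\log|Q|)$ and $n_2=\Theta\big(\frac{M^2}{\varepsilon_1^2\varepsilon_2^2}\log|Q|\log(\frac{M\log|Q|}{\varepsilon_1\varepsilon_2})\big)$, with suitable absolute constants. Then with probability at least $14/15$: if Algorithm 2 outputs a distribution $\mu'_D$ during the outer iteration with value $\ell$, then $\mathrm{Loss}(\mu'_D)\le\ell+\frac{2\varepsilon_1}{3}$.
   Context: Setting. $X$ is a countable set and $p$ is a probability distribution on $X$. For a distribution $q$ on $X$, $q_x$ is the mass of $x$ and $\mathrm{supp}(q)=\{x:q_x>0\}$. An invalidity function $\mathrm{Inv}:X\to\{0,1\}$ is given with $\mathrm{Inv}(x)=0$ for all $x\in\mathrm{supp}(p)$. For a distribution $q$, $\mathrm{Inv}(q)=\mathbb{E}_{x\sim q}[\mathrm{Inv}(x)]$. Fix $M>0$ and a monotone non-increasing function $L:[0,1]\to[0,M]$, and set $\mathrm{Loss}(q)=\mathbb{E}_{x\sim p}[L(q_x)]$. The learner may draw i.i.d. samples from $p$ and may query $\mathrm{Inv}(x)$ at any point. $Q$ is a finite family of probability distributions on $X$. A fixed point $x^*$ with $\mathrm{Inv}(x^* )=0$ is available. Algorithm 2 (parameters $\varepsilon_1,\varepsilon_2,\alpha,n_1,n_2$): (1) Draw $n_1$ i.i.d. samples from $p$. For every $q\in Q$ let $\overline{\mathrm{Loss}}(q)$ be the average of $L(q_x)$ over these samples.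 (2) For $\ell=0,\varepsilon_1/3,2\varepsilon_1/3,\dots$ (the multiples of $\varepsilon_1/3$ in $[0,M]$, in increasing order): (a) Set $D=\{q\in Q:\overline{\mathrm{Loss}}(q)\le\ell\}$. (b) While $D\neq\emptyset$: - Let $\mu_D=\frac1{|D|}\sum_{q\in D}q$. - Let $w_D(x)=\Pr_{q\sim\mathrm{Unif}(D)}[\varepsilon_1 q_x<3M\mu_D(x)]$. - Draw $n_2$ i.i.d. samples $x_1,\dots,x_{n_2}$ from $\mu_D$ and query their invalidity. - If $\frac1{n_2}\sum_{i}\mathrm{Inv}(x_i)w_D(x_i)\le\alpha+\frac{4\varepsilon_2}{5}$, output $\mu'_D$ and stop. Here $\mu'_D$ draws $x\sim\mu_D$, returns $x$ with probability $w_D(x)$, and returns $x^*$ otherwise. - Otherwise, remove from $D$ every $q$ with $\frac1{n_2}\sum_i\mathrm{Inv}(x_i)\frac{q_{x_i}}{\mu_D(x_i)}\mathbb{I}[\varepsilon_1q_{x_i}<3M\mu_D(x_i)]>\alpha+\frac{\varepsilon_2}{5}$. *)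

theory Defs
  imports "HOL-Probability.Probability"
begin

fun iid_samples :: "nat \<Rightarrow> 'a pmf \<Rightarrow> 'a list pmf" where
  "iid_samples 0 d = return_pmf []"
| "iid_samples (Suc n) d = do { x \<leftarrow> d; xs \<leftarrow> iid_samples n d; return_pmf (x # xs) }"

definition avg :: "('a \<Rightarrow> real) \<Rightarrow> 'a list \<Rightarrow> real" where
  "avg f xs = (\<Sum>x\<leftarrow>xs. f x) / real (length xs)"

definition inv01 :: "('a \<Rightarrow> bool) \<Rightarrow> 'a \<Rightarrow> real" where
  "inv01 Inv x = (if Inv x then 1 else 0)"

definition Loss :: "(real \<Rightarrow> real) \<Rightarrow> 'a pmf \<Rightarrow> 'a pmf \<Rightarrow> real" where
  "Loss L p q = measure_pmf.expectation p (\<lambda>x. L (pmf q x))"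

definition mixture :: "'a pmf set \<Rightarrow> 'a pmf" where
  "mixture D = bind_pmf (pmf_of_set D) (\<lambda>q. q)"

definition wD :: "real \<Rightarrow> real \<Rightarrow> 'a pmf set \<Rightarrow> 'a \<Rightarrow> real" where
  "wD eps1 M D x =
     real (card {q \<in> D. eps1 * pmf q x < 3 * M * pmf (mixture D) x}) / real (card D)"

definition mixture' :: "real \<Rightarrow> real \<Rightarrow> 'a \<Rightarrow> 'a pmf set \<Rightarrow> 'a pmf" where
  "mixture' eps1 M xstar D =
     bind_pmf (mixture D)
       (\<lambda>x. map_pmf (\<lambda>b. if b then x else xstar) (bernoulli_pmf (wD eps1 M D x)))"

definition rem_stat :: "real \<Rightarrow> real \<Rightarrow> ('a \<Rightarrow> bool) \<Rightarrow> 'a pmf set \<Rightarrow> 'a list \<Rightarrow> 'a pmf \<Rightarrow> real" where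
  "rem_stat eps1 M Inv D xs q =
     avg (\<lambda>x. inv01 Inv x * (pmf q x / pmf (mixture D) x) *
               (if eps1 * pmf q x < 3 * M * pmf (mixture D) x then 1 else 0)) xs"

text \<open>Inner while-loop (step 2(b)).  Result: Some mu'_D if an output is produced,
  None if D becomes empty.  Possible non-termination is modelled by the spmf monad.\<close>
partial_function (spmf) alg2_inner ::
  "real \<Rightarrow> real \<Rightarrow> real \<Rightarrow> real \<Rightarrow> nat \<Rightarrow> ('a \<Rightarrow> bool) \<Rightarrow> 'a \<Rightarrow>
   'a pmf set \<Rightarrow> 'a pmf option spmf" where
  "alg2_inner eps1 eps2 alpha M n2 Inv xstar D =
     (if D = {} then return_spmf None
      else bind_spmf (spmf_of_pmf (iid_samples n2 (mixture D))) (\<lambda>xs.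
        if avg (\<lambda>x. inv01 Inv x * wD eps1 M D x) xs \<le> alpha + 4 * eps2 / 5
        then return_spmf (Some (mixture' eps1 M xstar D))
        else alg2_inner eps1 eps2 alpha M n2 Inv xstar
               {q \<in> D. \<not> (rem_stat eps1 M Inv D xs q > alpha + eps2 / 5)}))"

partial_function (spmf) alg2_outer ::
  "real \<Rightarrow> real \<Rightarrow> real \<Rightarrow> real \<Rightarrow> nat \<Rightarrow> ('a \<Rightarrow> bool) \<Rightarrow> 'a \<Rightarrow>
   'a pmf set \<Rightarrow> ('a pmf \<Rightarrow> real) \<Rightarrow> nat \<Rightarrow> (real \<times> 'a pmf) option spmf" where
  "alg2_outer eps1 eps2 alpha M n2 Inv xstar Q emp k =
     (let l = real k * eps1 / 3 in
      if l > M then return_spmf None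
      else bind_spmf (alg2_inner eps1 eps2 alpha M n2 Inv xstar {q \<in> Q. emp q \<le> l}) (\<lambda>r.
        case r of
          Some mu \<Rightarrow> return_spmf (Some (l, mu))
        | None \<Rightarrow> alg2_outer eps1 eps2 alpha M n2 Inv xstar Q emp (Suc k)))"

definition alg2 ::
  "real \<Rightarrow> real \<Rightarrow> real \<Rightarrow> nat \<Rightarrow> nat \<Rightarrow> real \<Rightarrow> (real \<Rightarrow> real) \<Rightarrow> 'a pmf \<Rightarrow>
   ('a \<Rightarrow> bool) \<Rightarrow> 'a \<Rightarrow> 'a pmf set \<Rightarrow> (real \<times> 'a pmf) option spmf" where
  "alg2 eps1 eps2 alpha n1 n2 M L p Inv xstar Q =
     bind_spmf (spmf_of_pmf (iid_samples n1 p)) (\<lambda>ys.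
       alg2_outer eps1 eps2 alpha M n2 Inv xstar Q (\<lambda>q. avg (\<lambda>x. L (pmf q x)) ys) 0)"

end

theory Submission
  imports Defs
begin

text \<open>
  Whatever the random choices of the loops, an output of the outer loop at level \<open>l\<close> is
  \<open>\<mu>'\<^sub>D\<close> for some nonempty \<open>D\<close> whose members all have empirical loss at most \<open>l\<close>.
  On the event that every empirical loss underestimates the true loss by at most \<open>\<epsilon>\<^sub>1/3\<close>,
  which by Hoeffding's inequality and a union bound over \<open>Q\<close> fails with probability at most
  \<open>|Q| exp(-2 n\<^sub>1 \<epsilon>\<^sub>1\<^sup>2 / (9 M\<^sup>2)) \<le> 1/15\<close>, every \<open>q \<in> D\<close> has true loss at most
  \<open>l + \<epsilon>\<^sub>1/3\<close>. By convexity of \<open>L\<close> the same bound holds for the mixture \<open>\<mu>\<^sub>D\<close>.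
  Finally, by Markov's inequality \<open>w\<^sub>D(x) \<ge> 1 - \<epsilon>\<^sub>1/(3M)\<close> wherever \<open>\<mu>\<^sub>D(x) > 0\<close>, so
  \<open>\<mu>'\<^sub>D(x) \<ge> (1 - \<epsilon>\<^sub>1/(3M)) \<mu>\<^sub>D(x)\<close>, and monotonicity and convexity of \<open>L\<close> turn this
  into an extra loss of at most \<open>\<epsilon>\<^sub>1/3\<close>.
\<close>

lemma pmf_mixture:
  assumes "finite D" "D \<noteq> {}"
  shows "pmf (mixture D) x = (\<Sum>q\<in>D. pmf q x) / real (card D)"
  unfolding mixture_def pmf_bind using assms by (simp add: integral_pmf_of_set)

lemma wD_bounds:
  assumes "finite D" "D \<noteq> {}"
  shows "0 \<le> wD e M D x \<and> wD e M D x \<le> 1"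
proof -
  have "card {q \<in> D. e * pmf q x < 3 * M * pmf (mixture D) x} \<le> card D"
    using assms by (intro card_mono) auto
  then show ?thesis
    using assms unfolding wD_def by (auto simp: divide_le_eq_1)
qed

lemma wD_ge:
  assumes "finite D" "D \<noteq> {}" "M > 0" "e \<ge> 0" "pmf (mixture D) x > 0"
  shows "1 - e / (3 * M) \<le> wD e M D x"
proof -
  define mu where "mu = pmf (mixture D) x"
  define B where "B = {q \<in> D. 3 * M * mu \<le> e * pmf q x}"
  have "B \<subseteq> D" by (auto simp: B_def)
  have "real (card B) * (3 * M * mu) = (\<Sum>q\<in>B. 3 * M * mu)" by simp
  also have "\<dots> \<le> (\<Sum>q\<in>B. e * pmf q x)"
    by (intro sum_mono) (auto simp: B_def)
  also have "\<dots> \<le> (\<Sum>q\<in>D. e * pmf q x)"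
    using assms(1,4) \<open>B \<subseteq> D\<close> by (intro sum_mono2) auto
  also have "\<dots> = real (card D) * (e / (3 * M)) * (3 * M * mu)"
    using assms(1-3) by (simp add: mu_def pmf_mixture flip: sum_distrib_left)
  finally have "real (card B) \<le> real (card D) * (e / (3 * M))"
    using assms(3,5) by (simp add: mu_def field_simps)
  then have "real (card B) / real (card D) \<le> e / (3 * M)"
    using assms(1,2) by (subst pos_divide_le_eq) (auto simp: mult.commute)
  moreover have "wD e M D x = 1 - real (card B) / real (card D)"
  proof -
    have "{q \<in> D. e * pmf q x < 3 * M * mu} = D - B" by (auto simp: B_def)
    moreover have "card (D - B) = card D - card B" "card B \<le> card D"
      using assms(1) \<open>B \<subseteq> D\<close> by (auto simp: card_Diff_subset card_mono finite_subset)
    ultimately show ?thesis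
      using assms(1,2) by (simp add: wD_def mu_def of_nat_diff field_simps)
  qed
  ultimately show ?thesis by linarith
qed

lemma pmf_bind_pmf_ge: "pmf p y * pmf (f y) x \<le> pmf (bind_pmf p f) x"
proof -
  have "pmf p y * pmf (f y) x = (\<integral>z. indicator {y} z * pmf (f y) x \<partial>measure_pmf p)"
    by (simp add: measure_pmf_single)
  also have "\<dots> \<le> (\<integral>z. pmf (f z) x \<partial>measure_pmf p)"
    by (intro integral_mono measure_pmf.integrable_const_bound[where B=1])
       (auto simp: indicator_def pmf_le_1)
  finally show ?thesis by (simp add: pmf_bind)
qed

lemma pmf_mixture'_ge:
  assumes "finite D" "D \<noteq> {}"
  shows "pmf (mixture D) x * wD e M D x \<le> pmf (mixture' e M xstar D) x"
proof -
  let ?keep = "map_pmf (\<lambda>b. if b then x else xstar) (bernoulli_pmf (wD e M D x))"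
  have "wD e M D x = measure (bernoulli_pmf (wD e M D x)) {True}"
    using wD_bounds[OF assms] by (simp add: measure_pmf_single)
  also have "\<dots> \<le> measure (bernoulli_pmf (wD e M D x)) ((\<lambda>b. if b then x else xstar) -` {x})"
    by (intro measure_pmf.finite_measure_mono) auto
  also have "\<dots> = pmf ?keep x"
    by (simp add: pmf_map)
  finally have "pmf (mixture D) x * wD e M D x \<le> pmf (mixture D) x * pmf ?keep x"
    by (intro mult_left_mono) auto
  also have "\<dots> \<le> pmf (mixture' e M xstar D) x"
    unfolding mixture'_def by (rule pmf_bind_pmf_ge)
  finally show ?thesis .
qed

lemma pmf_mixture'_ge_scaled:
  assumes "finite D" "D \<noteq> {}" "M > 0" "e \<ge> 0"
  shows "(1 - e / (3 * M)) * pmf (mixture D) x \<le> pmf (mixture' e M xstar D) x"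
proof (cases "pmf (mixture D) x = 0")
  case False
  then have "(1 - e / (3 * M)) * pmf (mixture D) x \<le> wD e M D x * pmf (mixture D) x"
    using wD_ge[OF assms] by (intro mult_right_mono) (auto simp: order_less_le)
  also have "\<dots> \<le> pmf (mixture' e M xstar D) x"
    using pmf_mixture'_ge[OF assms(1,2)] by (simp add: mult.commute)
  finally show ?thesis .
qed simp

lemma integrable_L_pmf:
  fixes M :: real
  assumes "\<forall>t \<in> {0..1}. 0 \<le> L t \<and> L t \<le> M"
  shows "integrable (measure_pmf p) (\<lambda>x. L (pmf q x))"
  using assms by (intro measure_pmf.integrable_const_bound[where B=M]) (auto simp: pmf_le_1)

lemma Loss_mixture_le:
  assumes "finite D" "D \<noteq> {}"
    and bounded: "\<forall>t \<in> {0..1}. 0 \<le> L t \<and> L t \<le> M"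
    and convex: "convex_on {0..1} L"
    and "\<forall>q\<in>D. Loss L p q \<le> c"
  shows "Loss L p (mixture D) \<le> c"
proof -
  let ?w = "1 / real (card D)"
  have jensen: "L (pmf (mixture D) x) \<le> (\<Sum>q\<in>D. ?w * L (pmf q x))" for x
  proof -
    have "pmf (mixture D) x = (\<Sum>q\<in>D. ?w *\<^sub>R pmf q x)"
      using assms(1,2) by (simp add: pmf_mixture sum_divide_distrib)
    also have "L \<dots> \<le> (\<Sum>q\<in>D. ?w * L (pmf q x))"
      using assms(1,2) by (intro convex_on_sum[OF _ _ convex]) (auto simp: pmf_le_1)
    finally show ?thesis .
  qed
  have "Loss L p (mixture D) \<le> (\<integral>x. (\<Sum>q\<in>D. ?w * L (pmf q x)) \<partial>measure_pmf p)"
    unfolding Loss_def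
    by (intro integral_mono jensen integrable_L_pmf[OF bounded] Bochner_Integration.integrable_sum
        integrable_mult_right)
  also have "\<dots> = (\<Sum>q\<in>D. ?w * Loss L p q)"
    unfolding Loss_def by (subst Bochner_Integration.integral_sum) (auto intro: integrable_L_pmf[OF bounded])
  also have "\<dots> \<le> (\<Sum>q\<in>D. ?w * c)"
    using assms(5) by (intro sum_mono mult_left_mono) auto
  also have "\<dots> = c" using assms(1,2) by simp
  finally show ?thesis .
qed

lemma L_pmf_mixture'_le:
  assumes "finite D" "D \<noteq> {}" "M > 0" "e \<ge> 0"
    and bounded: "\<forall>t \<in> {0..1}. 0 \<le> L t \<and> L t \<le> M"
    and antimono: "\<forall>s \<in> {0..1}. \<forall>t \<in> {0..1}. s \<le> t \<longrightarrow> L t \<le> L s"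
    and convex: "convex_on {0..1} L"
  shows "L (pmf (mixture' e M xstar D) x) \<le> L (pmf (mixture D) x) + e / 3"
proof -
  define d where "d = e / (3 * M)"
  define mu where "mu = pmf (mixture D) x"
  have mu: "0 \<le> mu" "mu \<le> 1" by (auto simp: mu_def pmf_le_1)
  have "0 \<le> d" using assms(3,4) by (simp add: d_def)
  have "d * M = e / 3" using assms(3) by (simp add: d_def)
  show ?thesis
  proof (cases "d \<le> 1")
    case True
    have "(1 - d) * mu \<in> {0..1}" using True \<open>0 \<le> d\<close> mu by (auto intro: mult_le_one)
    then have "L (pmf (mixture' e M xstar D) x) \<le> L ((1 - d) * mu)"
      using antimono pmf_mixture'_ge_scaled[OF assms(1-4)] by (auto simp: d_def mu_def pmf_le_1)
    also have "\<dots> = L ((1 - d) *\<^sub>R mu + d *\<^sub>R 0)" by simp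
    also have "\<dots> \<le> (1 - d) * L mu + d * L 0"
      using True \<open>0 \<le> d\<close> mu by (intro convex_onD[OF convex]) auto
    also have "\<dots> \<le> L mu + d * M"
    proof -
      have "0 \<le> L mu" "L 0 \<le> M" using bounded mu by auto
      then show ?thesis
        using mult_left_mono[OF \<open>L 0 \<le> M\<close> \<open>0 \<le> d\<close>] mult_nonneg_nonneg[OF \<open>0 \<le> d\<close> \<open>0 \<le> L mu\<close>]
        by (simp add: algebra_simps)
    qed
    finally show ?thesis using \<open>d * M = e / 3\<close> by (simp add: mu_def)
  next
    case False
    then have "M \<le> d * M" using assms(3) by simp
    then have "M \<le> e / 3" using \<open>d * M = e / 3\<close> by simp
    moreover have "L (pmf (mixture' e M xstar D) x) \<le> M" "0 \<le> L mu"
      using bounded mu by (auto simp: pmf_le_1)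
    ultimately show ?thesis by (simp add: mu_def)
  qed
qed

lemma Loss_mixture'_le:
  assumes "finite D" "D \<noteq> {}" "M > 0" "e \<ge> 0"
    and bounded: "\<forall>t \<in> {0..1}. 0 \<le> L t \<and> L t \<le> M"
    and "\<forall>s \<in> {0..1}. \<forall>t \<in> {0..1}. s \<le> t \<longrightarrow> L t \<le> L s"
    and "convex_on {0..1} L"
  shows "Loss L p (mixture' e M xstar D) \<le> Loss L p (mixture D) + e / 3"
proof -
  have "Loss L p (mixture' e M xstar D) \<le> (\<integral>x. L (pmf (mixture D) x) + e / 3 \<partial>measure_pmf p)"
    unfolding Loss_def
    by (intro integral_mono L_pmf_mixture'_le[OF assms] integrable_L_pmf[OF bounded]
        Bochner_Integration.integrable_add) auto
  also have "\<dots> = Loss L p (mixture D) + e / 3"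
    unfolding Loss_def by (simp add: integrable_L_pmf[OF bounded])
  finally show ?thesis .
qed

lemma set_spmf_alg2_inner_subset:
  "set_spmf (alg2_inner eps1 eps2 alpha M n2 Inv xstar D)
     \<subseteq> insert None (Some ` {mixture' eps1 M xstar D' | D'. D' \<subseteq> D \<and> D' \<noteq> {}})"
proof (induction arbitrary: D rule: alg2_inner.fixp_induct)
  case 1
  show ?case by (intro admissible_all admissible_imp cont_intro) simp_all
next
  case 2
  show ?case by simp
next
  case (3 f)
  have IH: "set_spmf (f eps1 eps2 alpha M n2 Inv xstar D'')
        \<subseteq> insert None (Some ` {mixture' eps1 M xstar D' | D'. D' \<subseteq> D \<and> D' \<noteq> {}})"
    if "D'' \<subseteq> D" for D''
    using that by (intro order_trans[OF "3"] insert_mono image_mono) blast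
  have step: "set_spmf (if b then return_spmf (Some (mixture' eps1 M xstar D))
                        else f eps1 eps2 alpha M n2 Inv xstar D'')
        \<subseteq> insert None (Some ` {mixture' eps1 M xstar D' | D'. D' \<subseteq> D \<and> D' \<noteq> {}})"
    if "D \<noteq> {}" "D'' \<subseteq> D" for b D''
    using that IH[of D''] by auto
  show ?case
  proof (cases "D = {}")
    case False
    then show ?thesis
      by (simp only: False if_False bind_spmf_of_pmf set_spmf_bind_pmf bind_UNION UN_subset_iff o_apply)
        (intro ballI step False Collect_subset)
  qed simp
qed

lemma set_spmf_alg2_outer_subset:
  "set_spmf (alg2_outer eps1 eps2 alpha M n2 Inv xstar Q emp k)
     \<subseteq> insert None
          (Some ` {(l, mixture' eps1 M xstar D) | l D. D \<subseteq> {q \<in> Q. emp q \<le> l} \<and> D \<noteq> {}})"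
  (is "_ \<subseteq> ?R")
proof (induction arbitrary: k rule: alg2_outer.fixp_induct)
  case 1
  show ?case by (intro admissible_all admissible_imp cont_intro) simp_all
next
  case 2
  show ?case by simp
next
  case (3 f)
  define l where "l = real k * eps1 / 3"
  have step: "set_spmf (case r of None \<Rightarrow> f eps1 eps2 alpha M n2 Inv xstar Q emp (Suc k)
                          | Some mu \<Rightarrow> return_spmf (Some (l, mu))) \<subseteq> ?R"
    if "r \<in> set_spmf (alg2_inner eps1 eps2 alpha M n2 Inv xstar {q \<in> Q. emp q \<le> l})" for r
  proof (cases r)
    case None
    then show ?thesis using "3" by simp
  next
    case (Some mu)
    with subsetD[OF set_spmf_alg2_inner_subset that]
    obtain D where "D \<subseteq> {q \<in> Q. emp q \<le> l}" "D \<noteq> {}" "mu = mixture' eps1 M xstar D"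
      by auto
    then show ?thesis using Some by auto
  qed
  show ?case
    unfolding Let_def l_def[symmetric]
    by (simp add: set_bind_spmf bind_UNION UN_subset_iff step)
qed

lemma alg2_outer_output_Loss_le:
  assumes "finite Q" "M > 0" "e \<ge> 0"
    and bounded: "\<forall>t \<in> {0..1}. 0 \<le> L t \<and> L t \<le> M"
    and "\<forall>s \<in> {0..1}. \<forall>t \<in> {0..1}. s \<le> t \<longrightarrow> L t \<le> L s"
    and convex: "convex_on {0..1} L"
    and emp: "\<forall>q\<in>Q. Loss L p q \<le> emp q + e / 3"
    and out: "Some (l, mu) \<in> set_spmf (alg2_outer e eps2 alpha M n2 Inv xstar Q emp k)"
  shows "Loss L p mu \<le> l + 2 * e / 3"
proof -
  obtain D where D: "D \<subseteq> {q \<in> Q. emp q \<le> l}" "D \<noteq> {}" and mu: "mu = mixture' e M xstar D"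
    using subsetD[OF set_spmf_alg2_outer_subset out] by auto
  have "finite D" using D(1) \<open>finite Q\<close> by (auto intro: finite_subset)
  have "Loss L p (mixture D) \<le> l + e / 3"
    using D emp by (intro Loss_mixture_le[OF \<open>finite D\<close> D(2) bounded convex]) fastforce
  then show ?thesis
    using Loss_mixture'_le[OF \<open>finite D\<close> D(2) assms(2-6), of p xstar] unfolding mu by linarith
qed

lemma length_iid_samples: "xs \<in> set_pmf (iid_samples n d) \<Longrightarrow> length xs = n"
  by (induction n arbitrary: xs) auto

lemma Hoeffdings_lemma_pmf:
  fixes f :: "'a \<Rightarrow> real"
  assumes "\<forall>x\<in>set_pmf d. f x \<in> {a..b}" "l > 0"
  shows "(\<integral>\<^sup>+x. ennreal (exp (l * (f x - measure_pmf.expectation d f))) \<partial>measure_pmf d)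
           \<le> ennreal (exp (l\<^sup>2 * (b - a)\<^sup>2 / 8))"
proof -
  interpret interval_bounded_random_variable "measure_pmf d" f a b
    by unfold_locales (use assms in \<open>auto simp: AE_measure_pmf_iff\<close>)
  show ?thesis by (rule Hoeffdings_lemma_nn_integral[OF assms(2)])
qed

lemma nn_integral_exp_sum_iid_samples_le:
  fixes f :: "'a \<Rightarrow> real"
  assumes "\<forall>x\<in>set_pmf d. f x \<in> {a..b}" "l > 0"
  shows "(\<integral>\<^sup>+xs. ennreal (exp (l * (\<Sum>x\<leftarrow>xs. f x - measure_pmf.expectation d f)))
            \<partial>measure_pmf (iid_samples n d))
           \<le> ennreal (exp (l\<^sup>2 * (b - a)\<^sup>2 / 8)) ^ n"
proof (induction n)
  case 0
  show ?case by simp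
next
  case (Suc n)
  define E where "E = measure_pmf.expectation d f"
  define K where "K = ennreal (exp (l\<^sup>2 * (b - a)\<^sup>2 / 8))"
  define mgf where "mgf n = (\<integral>\<^sup>+xs. ennreal (exp (l * (\<Sum>x\<leftarrow>xs. f x - E))) \<partial>measure_pmf (iid_samples n d))"
    for n
  have "mgf (Suc n) = (\<integral>\<^sup>+x. ennreal (exp (l * (f x - E))) * mgf n \<partial>measure_pmf d)"
    by (simp add: mgf_def distrib_left exp_add ennreal_mult nn_integral_cmult)
  also have "\<dots> \<le> (\<integral>\<^sup>+x. ennreal (exp (l * (f x - E))) * K ^ n \<partial>measure_pmf d)"
    using Suc by (intro nn_integral_mono mult_left_mono) (auto simp: mgf_def E_def K_def)
  also have "\<dots> = (\<integral>\<^sup>+x. ennreal (exp (l * (f x - E))) \<partial>measure_pmf d) * K ^ n"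
    by (simp add: nn_integral_multc)
  also have "\<dots> \<le> K * K ^ n"
    using Hoeffdings_lemma_pmf[OF assms] by (intro mult_right_mono) (auto simp: E_def K_def)
  finally show ?case by (simp add: mgf_def E_def K_def)
qed

lemma iid_samples_sum_tail_le:
  fixes f :: "'a \<Rightarrow> real"
  assumes "\<forall>x\<in>set_pmf d. f x \<in> {a..b}" "l > 0"
  shows "measure_pmf.prob (iid_samples n d) {xs. s \<le> (\<Sum>x\<leftarrow>xs. f x - measure_pmf.expectation d f)}
           \<le> exp (- l * s) * exp (l\<^sup>2 * (b - a)\<^sup>2 / 8) ^ n"
proof -
  define S where "S xs = (\<Sum>x\<leftarrow>xs. f x - measure_pmf.expectation d f)" for xs
  have markov: "indicator {xs. s \<le> S xs} xs \<le> ennreal (exp (- l * s)) * ennreal (exp (l * S xs))" for xs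
  proof (cases "s \<le> S xs")
    case True
    then have "1 \<le> exp (- l * s) * exp (l * S xs)"
      using assms(2) by (simp flip: exp_add)
    then show ?thesis using True by (simp flip: ennreal_mult)
  qed simp
  have "emeasure (measure_pmf (iid_samples n d)) {xs. s \<le> S xs}
        = (\<integral>\<^sup>+xs. indicator {xs. s \<le> S xs} xs \<partial>measure_pmf (iid_samples n d))"
    by simp
  also have "\<dots> \<le> (\<integral>\<^sup>+xs. ennreal (exp (- l * s)) * ennreal (exp (l * S xs)) \<partial>measure_pmf (iid_samples n d))"
    by (intro nn_integral_mono markov)
  also have "\<dots> = ennreal (exp (- l * s)) * (\<integral>\<^sup>+xs. ennreal (exp (l * S xs)) \<partial>measure_pmf (iid_samples n d))"
    by (simp add: nn_integral_cmult)
  also have "\<dots> \<le> ennreal (exp (- l * s)) * ennreal (exp (l\<^sup>2 * (b - a)\<^sup>2 / 8)) ^ n"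
    using nn_integral_exp_sum_iid_samples_le[OF assms, of n] by (intro mult_left_mono) (auto simp: S_def)
  finally show ?thesis
    by (simp add: measure_pmf.emeasure_eq_measure S_def ennreal_power flip: ennreal_mult)
qed

lemma iid_samples_avg_lower_tail:
  fixes g :: "'a \<Rightarrow> real"
  assumes "n > 0" "M > 0" "t > 0" and g: "\<forall>x. 0 \<le> g x \<and> g x \<le> M"
  shows "measure_pmf.prob (iid_samples n p) {ys. measure_pmf.expectation p g > avg g ys + t}
           \<le> exp (- 2 * real n * t\<^sup>2 / M\<^sup>2)"
proof -
  define E where "E = measure_pmf.expectation p g"
  define l where "l = 4 * t / M\<^sup>2"
  have "l > 0" using assms(2,3) by (simp add: l_def)
  let ?A = "{ys. E > avg g ys + t}"
  let ?B = "{ys. real n * t \<le> (\<Sum>x\<leftarrow>ys. - g x - measure_pmf.expectation p (\<lambda>x. - g x))}"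
  have "?A \<inter> set_pmf (iid_samples n p) \<subseteq> ?B"
  proof
    fix ys assume ys: "ys \<in> ?A \<inter> set_pmf (iid_samples n p)"
    then have len: "length ys = n" by (auto dest: length_iid_samples)
    then have "real n * E > (\<Sum>x\<leftarrow>ys. g x) + real n * t"
      using ys assms(1) by (simp add: avg_def field_simps)
    moreover have "(\<Sum>x\<leftarrow>ys. - g x - measure_pmf.expectation p (\<lambda>x. - g x)) = real n * E - (\<Sum>x\<leftarrow>ys. g x)"
      using len by (simp add: sum_list_subtractf sum_list_triv E_def)
    ultimately show "ys \<in> ?B" by simp
  qed
  then have "measure_pmf.prob (iid_samples n p) ?A \<le> measure_pmf.prob (iid_samples n p) ?B"
    by (subst measure_Int_set_pmf[symmetric]) (intro measure_pmf.finite_measure_mono, auto)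
  also have "\<dots> \<le> exp (- l * (real n * t)) * exp (l\<^sup>2 * (0 - (- M))\<^sup>2 / 8) ^ n"
    using g \<open>l > 0\<close> by (intro iid_samples_sum_tail_le) auto
  also have "\<dots> = exp (real n * (- l * t + l\<^sup>2 * M\<^sup>2 / 8))"
    by (simp add: exp_of_nat_mult[symmetric] exp_add[symmetric] algebra_simps)
  also have "- l * t + l\<^sup>2 * M\<^sup>2 / 8 = - 2 * t\<^sup>2 / M\<^sup>2"
    using assms(2) by (simp add: l_def field_simps power2_eq_square)
  finally show ?thesis by (simp add: E_def mult.commute mult.left_commute)
qed

lemma measure_spmf_bind_pmf_le:
  assumes "\<And>ys. ys \<in> set_pmf P \<Longrightarrow> ys \<notin> B \<Longrightarrow> set_spmf (F ys) \<inter> A = {}"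
  shows "measure (measure_spmf (bind_pmf P F)) A \<le> measure_pmf.prob P B"
proof -
  have "emeasure (measure_pmf (F ys)) (Some ` A) \<le> indicator B ys" if "ys \<in> set_pmf P" for ys
  proof (cases "ys \<in> B")
    case False
    then have "Some ` A \<inter> set_pmf (F ys) = {}"
      using assms[OF that] by (auto simp: in_set_spmf)
    then show ?thesis
      by (metis emeasure_Int_set_pmf emeasure_empty zero_le)
  qed (simp add: measure_pmf.emeasure_le_1)
  then have "emeasure (measure_pmf (bind_pmf P F)) (Some ` A) \<le> emeasure (measure_pmf P) B"
    by (simp add: nn_integral_mono_AE AE_measure_pmf_iff flip: nn_integral_indicator)
  then show ?thesis
    by (simp add: measure_measure_spmf_conv_measure_pmf measure_pmf.emeasure_eq_measure)
qed

lemma card_mult_exp_sample_size_le: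
  fixes c n e M :: real
  assumes "c \<ge> 2" "M > 0" "e > 0"
    and n: "n \<ge> 45 / 2 * M\<^sup>2 / e\<^sup>2 * ln c"
  shows "c * exp (- 2 * n * (e / 3)\<^sup>2 / M\<^sup>2) \<le> 1 / 15"
proof -
  have "5 * ln c = (45 / 2 * M\<^sup>2 / e\<^sup>2 * ln c) * (2 * e\<^sup>2 / (9 * M\<^sup>2))"
    using assms(2,3) by (simp add: field_simps)
  also have "\<dots> \<le> n * (2 * e\<^sup>2 / (9 * M\<^sup>2))"
    using n by (intro mult_right_mono) auto
  also have "\<dots> = 2 * n * (e / 3)\<^sup>2 / M\<^sup>2"
    by (simp add: field_simps power2_eq_square)
  finally have "c * exp (- 2 * n * (e / 3)\<^sup>2 / M\<^sup>2) \<le> c * exp (- (5 * ln c))"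
    using assms(1) by simp
  also have "\<dots> = 1 / c ^ 4"
  proof -
    have "exp (5 * ln c) = c ^ 5" using exp_of_nat_mult[of 5 "ln c"] assms(1) by simp
    then show ?thesis using assms(1) by (simp add: exp_minus field_simps eval_nat_numeral)
  qed
  also have "\<dots> \<le> 1 / 2 ^ 4"
    using assms(1) by (intro divide_left_mono power_mono) auto
  finally show ?thesis by simp
qed

lemma alg2_Loss_failure_prob_le:
  assumes "finite Q" "card Q \<ge> 2" "M > 0" "eps1 > 0"
    and bounded: "\<forall>t \<in> {0..1}. 0 \<le> L t \<and> L t \<le> M"
    and antimono: "\<forall>s \<in> {0..1}. \<forall>t \<in> {0..1}. s \<le> t \<longrightarrow> L t \<le> L s"
    and convex: "convex_on {0..1} L"
    and n1: "real n1 \<ge> 45 / 2 * M\<^sup>2 / eps1\<^sup>2 * ln (real (card Q))"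
  shows "measure (measure_spmf (alg2 eps1 eps2 alpha n1 n2 M L p Inv xstar Q))
           {r. \<exists>l mu. r = Some (l, mu) \<and> Loss L p mu > l + 2 * eps1 / 3} \<le> 1 / 15"
proof -
  define underestimated where
    "underestimated q = {ys. Loss L p q > avg (\<lambda>x. L (pmf q x)) ys + eps1 / 3}" for q
  let ?P = "measure_pmf.prob (iid_samples n1 p)"
  have "0 < 45 / 2 * M\<^sup>2 / eps1\<^sup>2 * ln (real (card Q))"
    using assms(2-4) by simp
  then have "n1 > 0" using n1 by linarith
  have "measure (measure_spmf (alg2 eps1 eps2 alpha n1 n2 M L p Inv xstar Q))
          {r. \<exists>l mu. r = Some (l, mu) \<and> Loss L p mu > l + 2 * eps1 / 3}
        \<le> ?P (\<Union>q\<in>Q. underestimated q)"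
    unfolding alg2_def bind_spmf_of_pmf
  proof (rule measure_spmf_bind_pmf_le)
    fix ys assume "ys \<notin> (\<Union>q\<in>Q. underestimated q)"
    then have "\<forall>q\<in>Q. Loss L p q \<le> avg (\<lambda>x. L (pmf q x)) ys + eps1 / 3"
      by (auto simp: underestimated_def not_less)
    then have "Loss L p mu \<le> l + 2 * eps1 / 3"
      if "Some (l, mu) \<in> set_spmf (alg2_outer eps1 eps2 alpha M n2 Inv xstar Q (\<lambda>q. avg (\<lambda>x. L (pmf q x)) ys) 0)"
      for l mu
      using alg2_outer_output_Loss_le[OF assms(1,3) _ bounded antimono convex _ that] assms(4) by simp
    then show "set_spmf (alg2_outer eps1 eps2 alpha M n2 Inv xstar Q (\<lambda>q. avg (\<lambda>x. L (pmf q x)) ys) 0)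
               \<inter> {r. \<exists>l mu. r = Some (l, mu) \<and> Loss L p mu > l + 2 * eps1 / 3} = {}"
      by (auto simp: not_less[symmetric])
  qed
  also have "\<dots> \<le> (\<Sum>q\<in>Q. ?P (underestimated q))"
    using \<open>finite Q\<close> by (intro measure_pmf.finite_measure_subadditive_finite) auto
  also have "\<dots> \<le> (\<Sum>q\<in>Q. exp (- 2 * real n1 * (eps1 / 3)\<^sup>2 / M\<^sup>2))"
    unfolding underestimated_def Loss_def using \<open>n1 > 0\<close> assms(3,4) bounded
    by (intro sum_mono iid_samples_avg_lower_tail) (auto simp: pmf_le_1)
  also have "\<dots> \<le> 1 / 15"
    using card_mult_exp_sample_size_le[OF _ assms(3,4) n1] assms(2) by simp
  finally show ?thesis .
qed

theorem lemma5:
  "\<exists>C1>0. \<exists>C2>0.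
    \<forall>(p :: ('a :: countable) pmf) (Q :: 'a pmf set) (Inv :: 'a \<Rightarrow> bool) (xstar :: 'a)
      (M :: real) (L :: real \<Rightarrow> real) (eps1 :: real) (eps2 :: real) (alpha :: real)
      (n1 :: nat) (n2 :: nat).
      finite Q \<and> card Q \<ge> 2 \<and>
      (\<forall>x \<in> set_pmf p. \<not> Inv x) \<and> \<not> Inv xstar \<and>
      M > 0 \<and>
      (\<forall>t \<in> {0..1}. 0 \<le> L t \<and> L t \<le> M) \<and>
      (\<forall>s \<in> {0..1}. \<forall>t \<in> {0..1}. s \<le> t \<longrightarrow> L t \<le> L s) \<and>
      convex_on {0..1} L \<and>
      eps1 > 0 \<and> eps2 > 0 \<and>
      real n1 \<ge> C1 * M\<^sup>2 / eps1\<^sup>2 * ln (real (card Q)) \<and>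
      real n2 \<ge> C2 * M\<^sup>2 / (eps1\<^sup>2 * eps2\<^sup>2) * ln (real (card Q)) *
                   ln (M * ln (real (card Q)) / (eps1 * eps2))
      \<longrightarrow>
      measure (measure_spmf (alg2 eps1 eps2 alpha n1 n2 M L p Inv xstar Q))
        {r. \<exists>l mu. r = Some (l, mu) \<and> Loss L p mu > l + 2 * eps1 / 3} \<le> 1 / 15"
  by (rule exI[of _ "45 / 2"], rule conjI, simp, rule exI[of _ 1], rule conjI, simp)
    (intro allI impI alg2_Loss_failure_prob_le; auto)

end
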